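(* Let $C$ be a $k$-dimensional resolution configuration and let $F_C:V_0(C)\to V_1(C)$ be an associated map of bidegree $(k,2k)$ satisfying the naturality rule, the disoriented rule, the duality rule, the extension rule and the filtration rule. If $F_C$ is non-zero, then $F_C$ agrees with the Sarkar–Seed–Szabo formula; in particular the active part of $C$ is a disjoint union of trees and dual trees.
   Context: A $k$-dimensional resolution configuration $C$ is a finite set of pairwise disjoint embedded circles in $S^2$ (the starting circles) together with $k$ pairwise disjoint embedded arcs whose endpoints lie on the circles and whose interiors are disjoint from the circles; it is oriented if the arcs are oriented. The ending circles are obtained by surgery along all arcs. The dual configuration $C^*$ consists of the ending circles with dual arcs obtained by rotating each arc $90$ degrees counterclockwise; the mirror $m(C)$ is the reflection of $C$ in $\mathbb{R}\times\{0\}\subset\mathbb{R}^2\cup\{\infty\}=S^2$. A starting circle meeting no arc is passive (it is also an ending circle); removing all passive circles gives the active part $C_0$, and $V_i(C)=V_i(C_0)\otimes P(C)$ where $P(C)$ is the tensor product of $\mathbb{F}_2[w]/(w^2)$ over passive circles $w$. $C$ is connected if the graph with vertices the circles and edges the arcs is connected; any configuration is a disjoint union of connected components. A connected $n$-dimensional configuration is a tree if it has exactly $n+1$ starting circles and one ending circle; a dual tree is the dual of a tree. $V_0(C)=\bigotimes_i\mathbb{F}_2[x_i]/(x_i^2)$ over starting circles, $V_1(C)=\bigotimes_j\mathbb{F}_2[y_j]/(y_j^2)$ over ending circles, with bases of monomials. Quantum grading: in each factor $\mathrm{gr}_q(1)=1$, $\mathrm{gr}_q(z)=-1$, summed over factors,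 and for a $k$-dimensional configuration monomials of $V_1(C)$ get an extra shift of $+k$. A linear map $F_C$ has bidegree $(k,p)$ if it sends each monomial to a combination of monomials with quantum grading larger by $p$. Sarkar–Seed–Szabo formula: for a tree with starting circles $x_1,\dots,x_{n+1}$ and ending circle $y$, $F_C(x_1\cdots x_{n+1})=y$ and $F_C$ is zero on all other monomials; for a dual tree with ending circles $y_1,\dots,y_{n+1}$, $F_C(1)=1\otimes\cdots\otimes1$ and $F_C$ is zero on the other monomial; if the active part of $C$ is a disjoint union of trees and dual trees $C_1,\dots,C_m$, then $F_C=(\bigotimes_i F_{C_i})\otimes\mathrm{id}_{P(C)}$; otherwise $F_C=0$. Rules: (Naturality) if an orientation-preserving diffeomorphism of $S^2$ sends $C$ to $C'$, then $F_C=F_{C'}$ under the induced identifications. (Disoriented) if $C,C'$ differ only in orientations of arcs then $F_C=F_{C'}$. (Duality) with canonical identifications $V_0(m(C^* ))=V_1(C)$, $V_1(m(C^* ))=V_0(C)$, and $a\mapsto a^*$ the map on monomials induced by $1^*=z$, $z^*=1$ in each factor, the coefficient of $b$ in $F_C(a)$ equals the coefficient of $a^*$ in $F_{m(C^* )}(b^* )$ for all monomials $a\in V_0(C)$, $b\in V_1(C)$. (Extension) $F_C(a\cdot v)=F_{C_0}(a)\cdot v$ for $a\in V_0(C_0)$, $v\in P(C)$. (Filtration) for a point $P$ on the starting circles, with $x(P)$, $y(P)$ the starting and ending circles containing $P$: if monomial $a$ is divisible by $x(P)$ and the coefficient of monomial $b$ in $F_C(a)$ is non-zero, then $y(P)$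 divides $b$. *)

theory Defs
  imports Main
begin

text \<open>
Combinatorial model of (oriented) resolution configurations in S^2, up to
orientation-preserving diffeomorphism.

Each arc e has a small square neighbourhood whose boundary meets the starting
circles in four corners (e,0),(e,1),(e,2),(e,3), listed counterclockwise.
Inside the square, the starting circles run along the strands {0,1} and {2,3};
the arc is oriented from strand {0,1} to strand {2,3}.  After surgery the
ending circles run along the strands {1,2} and {3,0}.  Outside the squares the
circles consist of segments joining corners in pairs: this is the fixed point
free involution outer.  This gives a 4-valent map (vertices = arcs, rotation
(e,j) to (e,j+1)), planar on each connected component.  Passive circles are
labels in pas.  The placement of the connected components in S^2 is recorded by
labelling every complementary region: reg c is the region of the face traced
by the corner c (faces are orbits of rot4 o outer), pside w b is the region on
side b of the passive circle w; components and regions must form a tree.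
\<close>

type_synonym corner = "nat \<times> nat"

record cfg =
  arcs  :: "nat set"
  outer :: "corner \<Rightarrow> corner"
  pas   :: "nat set"
  reg   :: "corner \<Rightarrow> nat"
  pside :: "nat \<Rightarrow> bool \<Rightarrow> nat"

definition corners :: "cfg \<Rightarrow> corner set" where
  "corners C = arcs C \<times> {0..<4}"

definition rot4 :: "corner \<Rightarrow> corner" where
  "rot4 c = (fst c, (snd c + 1) mod 4)"

text \<open>pairing of corners by starting strands {0,1},{2,3} and ending strands {1,2},{3,0}\<close>
definition spair :: "nat \<Rightarrow> nat" where
  "spair j = (if even j then j + 1 else j - 1)"

definition epair :: "nat \<Rightarrow> nat" where
  "epair j = 3 - j"

definition sstep :: "cfg \<Rightarrow> corner \<Rightarrow> corner \<Rightarrow> bool" where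
  "sstep C c d \<longleftrightarrow> c \<in> corners C \<and> d \<in> corners C \<and>
     (d = outer C c \<or> (fst d = fst c \<and> snd d = spair (snd c)))"

definition estep :: "cfg \<Rightarrow> corner \<Rightarrow> corner \<Rightarrow> bool" where
  "estep C c d \<longleftrightarrow> c \<in> corners C \<and> d \<in> corners C \<and>
     (d = outer C c \<or> (fst d = fst c \<and> snd d = epair (snd c)))"

definition cstep :: "cfg \<Rightarrow> corner \<Rightarrow> corner \<Rightarrow> bool" where
  "cstep C c d \<longleftrightarrow> c \<in> corners C \<and> d \<in> corners C \<and>
     (d = outer C c \<or> fst d = fst c)"

text \<open>corners on the starting / ending circle through c; connected component of c\<close>
definition sclass :: "cfg \<Rightarrow> corner \<Rightarrow> corner set" where
  "sclass C c = {d. (sstep C)\<^sup>*\<^sup>* c d}"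

definition eclass :: "cfg \<Rightarrow> corner \<Rightarrow> corner set" where
  "eclass C c = {d. (estep C)\<^sup>*\<^sup>* c d}"

definition compclass :: "cfg \<Rightarrow> corner \<Rightarrow> corner set" where
  "compclass C c = {d. (cstep C)\<^sup>*\<^sup>* c d}"

definition face :: "cfg \<Rightarrow> corner \<Rightarrow> corner set" where
  "face C c = {d. \<exists>n. ((rot4 \<circ> outer C) ^^ n) c = d}"

datatype circ = Circ "corner set" | PasC nat

definition SC :: "cfg \<Rightarrow> circ set" where
  "SC C = (\<lambda>c. Circ (sclass C c)) ` corners C \<union> PasC ` pas C"

definition EC :: "cfg \<Rightarrow> circ set" where
  "EC C = (\<lambda>c. Circ (eclass C c)) ` corners C \<union> PasC ` pas C"

definition ACs :: "cfg \<Rightarrow> corner set set" where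
  "ACs C = compclass C ` corners C"

datatype node = NComp "corner set" | NPas nat | NReg nat

definition regions :: "cfg \<Rightarrow> nat set" where
  "regions C = reg C ` corners C \<union> {pside C w b | w b. w \<in> pas C}"

definition nodes :: "cfg \<Rightarrow> node set" where
  "nodes C = NComp ` ACs C \<union> NPas ` pas C \<union> NReg ` regions C"

definition adj :: "cfg \<Rightarrow> node \<Rightarrow> node \<Rightarrow> bool" where
  "adj C x y \<longleftrightarrow>
     (\<exists>c\<in>corners C. x = NComp (compclass C c) \<and> y = NReg (reg C c)) \<or>
     (\<exists>w\<in>pas C. \<exists>b. x = NPas w \<and> y = NReg (pside C w b))"

definition wf_cfg :: "cfg \<Rightarrow> bool" where
  "wf_cfg C \<longleftrightarrow> finite (arcs C) \<and> finite (pas C) \<and>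
     (\<forall>c\<in>corners C. outer C c \<in> corners C \<and> outer C c \<noteq> c \<and> outer C (outer C c) = c) \<and>
     (\<forall>c\<in>corners C. reg C (rot4 (outer C c)) = reg C c) \<and>
     (\<forall>K\<in>ACs C. card (face C ` K) = card (fst ` K) + 2) \<and>
     (nodes C \<noteq> {} \<longrightarrow>
        (\<forall>x\<in>nodes C. \<forall>y\<in>nodes C. (\<lambda>u v. adj C u v \<or> adj C v u)\<^sup>*\<^sup>* x y) \<and>
        card (face C ` corners C) + 2 * card (pas C) + 1 = card (nodes C))"

text \<open>orientation-preserving diffeomorphisms (isomorphisms of the data)\<close>
definition cfg_iso :: "cfg \<Rightarrow> cfg \<Rightarrow> (nat \<Rightarrow> nat) \<Rightarrow> (nat \<Rightarrow> nat) \<Rightarrow> (nat \<Rightarrow> nat)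
    \<Rightarrow> (nat \<Rightarrow> bool) \<Rightarrow> bool" where
  "cfg_iso C C' \<pi> \<rho> \<tau> s \<longleftrightarrow>
     bij_betw \<pi> (arcs C) (arcs C') \<and> bij_betw \<rho> (pas C) (pas C') \<and> inj_on \<tau> (regions C) \<and>
     (\<forall>e j. (e, j) \<in> corners C \<longrightarrow>
        outer C' (\<pi> e, j) = apfst \<pi> (outer C (e, j)) \<and> reg C' (\<pi> e, j) = \<tau> (reg C (e, j))) \<and>
     (\<forall>w\<in>pas C. \<forall>b. pside C' (\<rho> w) (b \<noteq> s w) = \<tau> (pside C w b))"

fun circ_map :: "(corner \<Rightarrow> corner) \<Rightarrow> (nat \<Rightarrow> nat) \<Rightarrow> circ \<Rightarrow> circ" where
  "circ_map \<phi> \<rho> (Circ S) = Circ (\<phi> ` S)"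
| "circ_map \<phi> \<rho> (PasC w) = PasC (\<rho> w)"

definition maph :: "(nat \<Rightarrow> nat \<Rightarrow> nat) \<Rightarrow> corner \<Rightarrow> corner" where
  "maph h c = (fst c, h (fst c) (snd c))"

text \<open>relabel the corners of every square by h (inverse hinv); orev: orientation reversing\<close>
definition relab :: "(nat \<Rightarrow> nat \<Rightarrow> nat) \<Rightarrow> (nat \<Rightarrow> nat \<Rightarrow> nat) \<Rightarrow> bool \<Rightarrow> cfg \<Rightarrow> cfg" where
  "relab h hinv orev C = C\<lparr> outer := (\<lambda>c. maph h (outer C (maph hinv c))),
      reg := (\<lambda>c. if orev then reg C (outer C (maph hinv c)) else reg C (maph hinv c)) \<rparr>"

definition rev_h :: "nat set \<Rightarrow> nat \<Rightarrow> nat \<Rightarrow> nat" where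
  "rev_h Os e j = (if e \<in> Os then (j + 2) mod 4 else j)"

text \<open>reverse the orientation of the arcs in Os\<close>
definition reorient :: "nat set \<Rightarrow> cfg \<Rightarrow> cfg" where
  "reorient Os C = relab (rev_h Os) (rev_h Os) False C"

definition md_h :: "nat \<Rightarrow> nat \<Rightarrow> nat" where
  "md_h e j = (6 - j) mod 4"

text \<open>m(C^*): dual (arcs rotated 90 degrees counterclockwise) followed by the mirror\<close>
definition mdual :: "cfg \<Rightarrow> cfg" where
  "mdual C = relab md_h md_h True C"

text \<open>the configuration T with T^* = C (arcs rotated 90 degrees clockwise)\<close>
definition undual :: "cfg \<Rightarrow> cfg" where
  "undual C = relab (\<lambda>e j. (j + 1) mod 4) (\<lambda>e j. (j + 3) mod 4) False C"

text \<open>active part C_0: passive circles removed, adjacent regions merged\<close>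
definition rmerge :: "cfg \<Rightarrow> nat \<Rightarrow> nat \<Rightarrow> bool" where
  "rmerge C x y \<longleftrightarrow> (\<exists>w\<in>pas C. (x = pside C w False \<and> y = pside C w True) \<or>
                                (x = pside C w True \<and> y = pside C w False))"

definition active :: "cfg \<Rightarrow> cfg" where
  "active C = C\<lparr> pas := {}, reg := (\<lambda>c. LEAST r. (rmerge C)\<^sup>*\<^sup>* (reg C c) r) \<rparr>"

definition SCK :: "cfg \<Rightarrow> corner set \<Rightarrow> circ set" where
  "SCK C K = (\<lambda>c. Circ (sclass C c)) ` K"

definition ECK :: "cfg \<Rightarrow> corner set \<Rightarrow> circ set" where
  "ECK C K = (\<lambda>c. Circ (eclass C c)) ` K"

definition tree_comp :: "cfg \<Rightarrow> corner set \<Rightarrow> bool" where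
  "tree_comp C K \<longleftrightarrow> card (SCK C K) = card (fst ` K) + 1 \<and> card (ECK C K) = 1"

definition dtree_comp :: "cfg \<Rightarrow> corner set \<Rightarrow> bool" where
  "dtree_comp C K \<longleftrightarrow> tree_comp (undual C) (maph (\<lambda>e j. (j + 1) mod 4) ` K)"

text \<open>maps are given by coefficients: F C a b = coefficient of monomial b in F_C(a),
  monomials being the sets of circles carrying the variable x_i / y_j\<close>
type_synonym cmap = "circ set \<Rightarrow> circ set \<Rightarrow> bool"

definition sss :: "cfg \<Rightarrow> cmap" where
  "sss C a b \<longleftrightarrow>
     (\<forall>K\<in>ACs C. tree_comp C K \<or> dtree_comp C K) \<and>
     (\<forall>K\<in>ACs C. tree_comp C K \<longrightarrow> SCK C K \<subseteq> a \<and> ECK C K \<subseteq> b) \<and>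
     (\<forall>K\<in>ACs C. dtree_comp C K \<longrightarrow> SCK C K \<inter> a = {} \<and> ECK C K \<inter> b = {}) \<and>
     (\<forall>w\<in>pas C. PasC w \<in> a \<longleftrightarrow> PasC w \<in> b)"

definition bidegree_rule :: "(cfg \<Rightarrow> cmap) \<Rightarrow> bool" where
  "bidegree_rule F \<longleftrightarrow> (\<forall>C a b. wf_cfg C \<longrightarrow> a \<subseteq> SC C \<longrightarrow> b \<subseteq> EC C \<longrightarrow> F C a b \<longrightarrow>
     int (card (EC C)) - 2 * int (card b) + int (card (arcs C))
       = int (card (SC C)) - 2 * int (card a) + 2 * int (card (arcs C)))"

definition naturality_rule :: "(cfg \<Rightarrow> cmap) \<Rightarrow> bool" where
  "naturality_rule F \<longleftrightarrow> (\<forall>C C' \<pi> \<rho> \<tau> s. wf_cfg C \<longrightarrow> wf_cfg C' \<longrightarrow> cfg_iso C C' \<pi> \<rho> \<tau> s \<longrightarrow>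
     (\<forall>a b. a \<subseteq> SC C \<longrightarrow> b \<subseteq> EC C \<longrightarrow>
        F C a b = F C' (circ_map (apfst \<pi>) \<rho> ` a) (circ_map (apfst \<pi>) \<rho> ` b)))"

definition disoriented_rule :: "(cfg \<Rightarrow> cmap) \<Rightarrow> bool" where
  "disoriented_rule F \<longleftrightarrow> (\<forall>C Os. wf_cfg C \<longrightarrow> Os \<subseteq> arcs C \<longrightarrow>
     (\<forall>a b. a \<subseteq> SC C \<longrightarrow> b \<subseteq> EC C \<longrightarrow>
        F C a b = F (reorient Os C) (circ_map (maph (rev_h Os)) id ` a)
                                   (circ_map (maph (rev_h Os)) id ` b)))"

definition duality_rule :: "(cfg \<Rightarrow> cmap) \<Rightarrow> bool" where
  "duality_rule F \<longleftrightarrow> (\<forall>C. wf_cfg C \<longrightarrow>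
     (\<forall>a b. a \<subseteq> SC C \<longrightarrow> b \<subseteq> EC C \<longrightarrow>
        F C a b = F (mdual C) (circ_map (maph md_h) id ` (EC C - b))
                              (circ_map (maph md_h) id ` (SC C - a))))"

definition extension_rule :: "(cfg \<Rightarrow> cmap) \<Rightarrow> bool" where
  "extension_rule F \<longleftrightarrow> (\<forall>C. wf_cfg C \<longrightarrow>
     (\<forall>a v b. a \<subseteq> SC (active C) \<longrightarrow> v \<subseteq> pas C \<longrightarrow> b \<subseteq> EC C \<longrightarrow>
        F C (a \<union> PasC ` v) b =
          (b \<inter> PasC ` pas C = PasC ` v \<and> F (active C) a (b - PasC ` pas C))))"

definition filtration_rule :: "(cfg \<Rightarrow> cmap) \<Rightarrow> bool" where
  "filtration_rule F \<longleftrightarrow> (\<forall>C a b. wf_cfg C \<longrightarrow> a \<subseteq> SC C \<longrightarrow> b \<subseteq> EC C \<longrightarrow> F C a b \<longrightarrow>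
     (\<forall>c\<in>corners C. Circ (sclass C c) \<in> a \<longrightarrow> Circ (eclass C c) \<in> b) \<and>
     (\<forall>w\<in>pas C. PasC w \<in> a \<longrightarrow> PasC w \<in> b))"

end

theory Submission
  imports Defs
begin

text \<open>
  Consider a component K with k arcs, s starting circles and e ending circles. Performing the
  surgeries one arc at a time changes the number of circles by at most one, and strictly
  decreases it whenever the arc joins two different clusters of starting circles; hence
  s + e \<le> k + 2 and s \<le> k + 1. If the coefficient of b in F_C(a) is non-zero, the bidegree rule
  says that the defects s - e + k - 2 |a \<inter> SCK C K| + 2 |b \<inter> ECK C K| of the components, plus
  a passive term, sum to zero. The filtration rule makes every defect and the passive term
  nonnegative, and a defect vanishes only for a tree with all circles in a and b or a dual tree
  with none. So every non-zero coefficient has the Sarkar-Seed-Szabo shape; since that shape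
  fixes a and b on the active part, the extension rule shows that all coefficients of this
  shape equal the non-zero one.
\<close>

section \<open>Classes of symmetric relations\<close>

definition classes :: "('a \<Rightarrow> 'a \<Rightarrow> bool) \<Rightarrow> 'a set \<Rightarrow> 'a set set" where
  "classes R X = (\<lambda>c. Collect (R\<^sup>*\<^sup>* c)) ` X"

lemma rtranclp_class_eq:
  assumes "symp R" and "R\<^sup>*\<^sup>* c d"
  shows "Collect (R\<^sup>*\<^sup>* c) = Collect (R\<^sup>*\<^sup>* d)"
  using assms sympD[OF symp_rtranclp[OF assms(1)]] by (blast intro: rtranclp_trans)

lemma rtranclp_class_cong:
  assumes agree: "\<And>d e. d \<notin> Q \<Longrightarrow> R d e = R' d e"
    and avoid: "Collect (R\<^sup>*\<^sup>* c) \<inter> Q = {}"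
  shows "Collect (R'\<^sup>*\<^sup>* c) = Collect (R\<^sup>*\<^sup>* c)"
proof (intro equalityI subsetI CollectI; drule CollectD)
  fix d assume "R'\<^sup>*\<^sup>* c d"
  then show "R\<^sup>*\<^sup>* c d"
  proof induction
    case (step y z)
    with avoid agree have "R y z" by blast
    with step show ?case by (simp add: rtranclp.rtrancl_into_rtrancl)
  qed simp
next
  fix d assume "R\<^sup>*\<^sup>* c d"
  then show "R'\<^sup>*\<^sup>* c d"
  proof induction
    case (step y z)
    with avoid agree have "R' y z" by blast
    with step show ?case by (simp add: rtranclp.rtrancl_into_rtrancl)
  qed simp
qed

lemma card_classes_split:
  assumes "symp R" and "finite X" and "Q \<subseteq> X"
  shows "card (classes R X) = card {S \<in> classes R X. S \<inter> Q = {}} + card (classes R Q)"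
proof -
  have "classes R X = {S \<in> classes R X. S \<inter> Q = {}} \<union> classes R Q"
  proof (intro equalityI subsetI)
    fix S assume S: "S \<in> classes R X"
    show "S \<in> {S \<in> classes R X. S \<inter> Q = {}} \<union> classes R Q"
    proof (cases "S \<inter> Q = {}")
      case False
      with S obtain c q where "S = Collect (R\<^sup>*\<^sup>* c)" "q \<in> Q" "R\<^sup>*\<^sup>* c q"
        unfolding classes_def by blast
      then show ?thesis using rtranclp_class_eq[OF assms(1)] unfolding classes_def by blast
    qed (use S in blast)
  qed (use assms(3) in \<open>auto simp: classes_def\<close>)
  moreover have "finite (classes R X)" "finite (classes R Q)"
    using assms(2,3) finite_subset by (auto simp: classes_def)
  moreover have "{S \<in> classes R X. S \<inter> Q = {}} \<inter> classes R Q = {}"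
    by (auto simp: classes_def)
  ultimately show ?thesis by (metis (no_types, lifting) card_Un_disjoint finite_Un)
qed

lemma card_classes_local_change:
  assumes "symp R" and "symp R'" and agree: "\<And>d e. d \<notin> Q \<Longrightarrow> R d e = R' d e"
    and "finite X" and "Q \<subseteq> X"
  shows "card (classes R X) + card (classes R' Q) = card (classes R' X) + card (classes R Q)"
proof -
  have untouched: "{S \<in> classes R1 X. S \<inter> Q = {}} \<subseteq> {S \<in> classes R2 X. S \<inter> Q = {}}"
    if "\<And>d e. d \<notin> Q \<Longrightarrow> R1 d e = R2 d e" for R1 R2 :: "'a \<Rightarrow> 'a \<Rightarrow> bool"
  proof
    fix S assume "S \<in> {S \<in> classes R1 X. S \<inter> Q = {}}"
    then obtain c where "c \<in> X" "S = Collect (R1\<^sup>*\<^sup>* c)" "S \<inter> Q = {}"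
      by (auto simp: classes_def)
    with rtranclp_class_cong[of Q R1 R2, OF that] show "S \<in> {S \<in> classes R2 X. S \<inter> Q = {}}"
      by (auto simp: classes_def)
  qed
  have "{S \<in> classes R X. S \<inter> Q = {}} = {S \<in> classes R' X. S \<inter> Q = {}}"
    using untouched[of R R'] untouched[of R' R] agree by (simp add: subset_antisym)
  then show ?thesis using card_classes_split[OF assms(1,4,5)] card_classes_split[OF assms(2,4,5)]
    by simp
qed

lemma classes_of_two_steps:
  assumes "symp R" and "R a b" and "R c d"
  shows "classes R {a, b, c, d} = {Collect (R\<^sup>*\<^sup>* a), Collect (R\<^sup>*\<^sup>* c)}"
  using rtranclp_class_eq[OF assms(1) r_into_rtranclp[of R, OF assms(2)]]
    rtranclp_class_eq[OF assms(1) r_into_rtranclp[of R, OF assms(3)]]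
  unfolding classes_def by auto

lemma even_card_involution:
  assumes "finite S" and "\<And>v. v \<in> S \<Longrightarrow> f v \<in> S" and "\<And>v. v \<in> S \<Longrightarrow> f v \<noteq> v"
    and "\<And>v. v \<in> S \<Longrightarrow> f (f v) = v"
  shows "even (card S)"
  using assms
proof (induction "card S" arbitrary: S rule: less_induct)
  case less
  show ?case
  proof (cases "S = {}")
    case False
    then obtain v where v: "v \<in> S" by blast
    let ?S' = "S - {v, f v}"
    have "{v, f v} \<subseteq> S" "card {v, f v} = 2" using v less.prems(2,3)[OF v] by auto
    then have card_S: "card S = card ?S' + 2"
      using card_mono[OF less.prems(1), of "{v, f v}"] by (simp add: card_Diff_subset)
    have "even (card ?S')"
    proof (rule less.hyps)
      show "f w \<in> ?S'" if "w \<in> ?S'" for w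
      proof -
        have "f w \<noteq> v" "f w \<noteq> f v" using that less.prems(4) v by (metis DiffE insertCI)+
        then show ?thesis using that less.prems(2) by blast
      qed
    qed (use card_S less.prems in simp_all)
    with card_S show ?thesis by simp
  qed simp
qed

section \<open>Counting the circles of a resolution\<close>

text \<open>The corner joined to c inside its square when exactly the arcs in T are surgered.\<close>

definition resolution_partner :: "nat set \<Rightarrow> corner \<Rightarrow> corner" where
  "resolution_partner T c = (fst c, if fst c \<in> T then epair (snd c) else spair (snd c))"

lemma less_4_cases: "(j::nat) < 4 \<Longrightarrow> j = 0 \<or> j = 1 \<or> j = 2 \<or> j = 3"
  by auto

lemma spair_involution: "j < 4 \<Longrightarrow> spair j < 4 \<and> spair j \<noteq> j \<and> spair (spair j) = j"
  by (auto simp: spair_def dest!: less_4_cases)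

lemma epair_involution: "j < 4 \<Longrightarrow> epair j < 4 \<and> epair j \<noteq> j \<and> epair (epair j) = j"
  by (auto simp: epair_def dest!: less_4_cases)

locale arc_diagram =
  fixes A :: "nat set" and out :: "corner \<Rightarrow> corner"
  assumes finite_arcs: "finite A"
    and out_corner: "c \<in> A \<times> {0..<4} \<Longrightarrow> out c \<in> A \<times> {0..<4}"
    and out_no_fixpoint: "c \<in> A \<times> {0..<4} \<Longrightarrow> out c \<noteq> c"
    and out_out: "c \<in> A \<times> {0..<4} \<Longrightarrow> out (out c) = c"
begin

definition circle_step :: "nat set \<Rightarrow> corner \<Rightarrow> corner \<Rightarrow> bool" where
  "circle_step T c d \<longleftrightarrow> c \<in> A \<times> {0..<4} \<and> d \<in> A \<times> {0..<4} \<and>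
     (d = out c \<or> d = resolution_partner T c)"

definition ncircles :: "nat set \<Rightarrow> nat" where
  "ncircles T = card (classes (circle_step T) (A \<times> {0..<4}))"

text \<open>The clusters of T are the connected components of the union of the starting circles
  with the squares of the arcs in T.\<close>

definition cluster_step :: "nat set \<Rightarrow> corner \<Rightarrow> corner \<Rightarrow> bool" where
  "cluster_step T c d \<longleftrightarrow> c \<in> A \<times> {0..<4} \<and> d \<in> A \<times> {0..<4} \<and>
     (d = out c \<or> d = resolution_partner {} c \<or> (fst d = fst c \<and> fst c \<in> T))"

definition nclusters :: "nat set \<Rightarrow> nat" where
  "nclusters T = card (classes (cluster_step T) (A \<times> {0..<4}))"

lemma finite_corners: "finite (A \<times> {0..<4::nat})"
  using finite_arcs by simp

lemma resolution_partner_involution: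
  assumes "c \<in> A \<times> {0..<4}"
  shows "resolution_partner T c \<in> A \<times> {0..<4} \<and> resolution_partner T c \<noteq> c \<and>
    resolution_partner T (resolution_partner T c) = c"
  using assms spair_involution[of "snd c"] epair_involution[of "snd c"]
  by (cases c) (auto simp: resolution_partner_def)

lemma symp_circle_step: "symp (circle_step T)"
  by (rule sympI) (auto simp: circle_step_def out_out resolution_partner_involution)

lemma symp_cluster_step: "symp (cluster_step T)"
  by (rule sympI) (auto simp: cluster_step_def out_out resolution_partner_involution)

lemma circle_step_le_cluster_step: "circle_step T c d \<Longrightarrow> cluster_step T c d"
  by (auto simp: circle_step_def cluster_step_def resolution_partner_def)

lemma circle_step_insert:
  "c \<notin> {x} \<times> {0..<4} \<Longrightarrow> circle_step (insert x T) c d = circle_step T c d"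
  by (cases c) (auto simp: circle_step_def resolution_partner_def)

lemma cluster_step_insert:
  "c \<notin> {x} \<times> {0..<4} \<Longrightarrow> cluster_step (insert x T) c d = cluster_step T c d"
  by (cases c) (auto simp: cluster_step_def)

lemma square_eq: "{x} \<times> {0..<4::nat} = {(x, 0), (x, 1), (x, 2), (x, 3)}"
  by auto

lemma circle_classes_of_square:
  assumes "x \<in> A"
  shows "classes (circle_step T) ({x} \<times> {0..<4}) =
    {Collect ((circle_step T)\<^sup>*\<^sup>* (x, 0)), Collect ((circle_step T)\<^sup>*\<^sup>* (x, if x \<in> T then 1 else 2))}"
proof (cases "x \<in> T")
  case True
  then have "circle_step T (x, 0) (x, 3)" "circle_step T (x, 1) (x, 2)"
    using assms by (auto simp: circle_step_def resolution_partner_def epair_def)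
  from classes_of_two_steps[OF symp_circle_step this] True show ?thesis
    by (simp add: square_eq insert_commute)
next
  case False
  then have "circle_step T (x, 0) (x, 1)" "circle_step T (x, 2) (x, 3)"
    using assms by (auto simp: circle_step_def resolution_partner_def spair_def)
  from classes_of_two_steps[OF symp_circle_step this] False show ?thesis
    by (simp add: square_eq)
qed

lemma cluster_classes_of_square:
  assumes "x \<in> A"
  shows "classes (cluster_step T) ({x} \<times> {0..<4}) =
    {Collect ((cluster_step T)\<^sup>*\<^sup>* (x, 0)), Collect ((cluster_step T)\<^sup>*\<^sup>* (x, if x \<in> T then 0 else 2))}"
proof (cases "x \<in> T")
  case True
  have "cluster_step T (x, 0) c" if "c \<in> {x} \<times> {0..<4}" for c
    using that assms True by (auto simp: cluster_step_def)
  then have "classes (cluster_step T) ({x} \<times> {0..<4}) =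
      (\<lambda>_. Collect ((cluster_step T)\<^sup>*\<^sup>* (x, 0))) ` ({x} \<times> {0..<4::nat})"
    unfolding classes_def
    by (intro image_cong refl) (metis rtranclp_class_eq[OF symp_cluster_step] r_into_rtranclp)
  with True show ?thesis by (simp add: image_constant_conv)
next
  case False
  then have "cluster_step T (x, 0) (x, 1)" "cluster_step T (x, 2) (x, 3)"
    using assms by (auto simp: cluster_step_def resolution_partner_def spair_def)
  from classes_of_two_steps[OF symp_cluster_step this] False show ?thesis
    by (simp add: square_eq)
qed

lemma circle_step_rtranclp_corner:
  "(circle_step T)\<^sup>*\<^sup>* c d \<Longrightarrow> c \<in> A \<times> {0..<4} \<Longrightarrow> d \<in> A \<times> {0..<4}"
  by (induction rule: rtranclp_induct) (auto simp: circle_step_def)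

text \<open>A parity count on the set D of corners lying on the circle of (x, 0) both before and
  after the surgery: D is closed under out, and D - {(x, 0)} under the strand pairing, which
  the surgery leaves unchanged off the square of x.\<close>

lemma surgery_merges_circles:
  assumes x: "x \<in> A" and "x \<notin> T" and apart: "\<not> (circle_step T)\<^sup>*\<^sup>* (x, 0) (x, 2)"
  shows "(circle_step (insert x T))\<^sup>*\<^sup>* (x, 0) (x, 1)"
proof (rule ccontr)
  assume apart': "\<not> (circle_step (insert x T))\<^sup>*\<^sup>* (x, 0) (x, 1)"
  define D where
    "D = Collect ((circle_step T)\<^sup>*\<^sup>* (x, 0)) \<inter> Collect ((circle_step (insert x T))\<^sup>*\<^sup>* (x, 0))"
  have x0: "(x, 0) \<in> D" "(x, 0) \<in> A \<times> {0..<4::nat}" using x by (auto simp: D_def)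
  have closed: "d \<in> D" if "c \<in> D" "circle_step T c d" "circle_step (insert x T) c d" for c d
    using that unfolding D_def by (auto intro: rtranclp.rtrancl_into_rtrancl)
  have D_corners: "D \<subseteq> A \<times> {0..<4}"
    using circle_step_rtranclp_corner x0(2) by (auto simp: D_def)
  have "finite D" using finite_subset[OF D_corners finite_corners] .
  have "(x, 3) \<notin> D"
  proof
    assume "(x, 3) \<in> D"
    moreover have "circle_step T (x, 3) (x, 2)"
      using x \<open>x \<notin> T\<close> by (simp add: circle_step_def resolution_partner_def spair_def)
    ultimately show False
      using apart by (auto simp: D_def intro: rtranclp.rtrancl_into_rtrancl)
  qed
  moreover have "(x, 2) \<notin> D" "(x, 1) \<notin> D" using apart apart' by (auto simp: D_def)
  moreover have "snd v < 4" if "v \<in> D" for v using that D_corners by auto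
  ultimately have off_square: "fst v \<noteq> x" if "v \<in> D - {(x, 0)}" for v
    using that by (cases v) (fastforce dest!: less_4_cases)
  have "even (card D)"
  proof (rule even_card_involution[OF \<open>finite D\<close>])
    fix v assume v: "v \<in> D"
    then have "v \<in> A \<times> {0..<4}" using D_corners by blast
    then show "out v \<in> D" "out v \<noteq> v" "out (out v) = v"
      using closed[OF v] out_corner out_no_fixpoint out_out by (auto simp: circle_step_def)
  qed
  moreover have "even (card (D - {(x, 0)}))"
  proof (rule even_card_involution[where f = "resolution_partner T"])
    fix v assume v: "v \<in> D - {(x, 0)}"
    then have v_corner: "v \<in> A \<times> {0..<4}" using D_corners by blast
    note partner = resolution_partner_involution[OF this, of T]
    have "resolution_partner (insert x T) v = resolution_partner T v"
      using off_square[OF v] by (simp add: resolution_partner_def)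
    then have "circle_step T v (resolution_partner T v)"
      "circle_step (insert x T) v (resolution_partner T v)"
      using v_corner partner by (simp_all add: circle_step_def)
    then have "resolution_partner T v \<in> D" using v closed by blast
    moreover have "resolution_partner T v \<noteq> (x, 0)"
    proof
      assume "resolution_partner T v = (x, 0)"
      then have "v = resolution_partner T (x, 0)" using partner by metis
      then have "v = (x, 1)" using \<open>x \<notin> T\<close> by (simp add: resolution_partner_def spair_def)
      with v \<open>(x, 1) \<notin> D\<close> show False by blast
    qed
    ultimately show "resolution_partner T v \<in> D - {(x, 0)}" by blast
    show "resolution_partner T v \<noteq> v" "resolution_partner T (resolution_partner T v) = v"
      using partner by auto
  qed (use \<open>finite D\<close> in simp)
  ultimately show False using x0(1) \<open>finite D\<close> by (simp add: card_Diff_singleton)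
qed

lemma ncircles_insert:
  assumes x: "x \<in> A" and "x \<notin> T"
  shows "ncircles (insert x T) \<le> ncircles T + 1"
    and "\<not> (cluster_step T)\<^sup>*\<^sup>* (x, 0) (x, 2) \<Longrightarrow> ncircles (insert x T) + 1 \<le> ncircles T"
proof -
  let ?Q = "{x} \<times> {0..<4::nat}"
  let ?before = "classes (circle_step T) ?Q" and ?after = "classes (circle_step (insert x T)) ?Q"
  have change: "ncircles T + card ?after = ncircles (insert x T) + card ?before"
    unfolding ncircles_def
    by (rule card_classes_local_change[OF symp_circle_step symp_circle_step])
      (use circle_step_insert finite_corners x in auto)
  have before: "?before = {Collect ((circle_step T)\<^sup>*\<^sup>* (x, 0)), Collect ((circle_step T)\<^sup>*\<^sup>* (x, 2))}"
    using circle_classes_of_square[OF x, of T] \<open>x \<notin> T\<close> by simp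
  have after: "?after = {Collect ((circle_step (insert x T))\<^sup>*\<^sup>* (x, 0)),
      Collect ((circle_step (insert x T))\<^sup>*\<^sup>* (x, 1))}"
    using circle_classes_of_square[OF x, of "insert x T"] by simp
  have "1 \<le> card ?before" "card ?after \<le> 2"
    unfolding before after by (simp_all add: card_insert_if)
  with change show "ncircles (insert x T) \<le> ncircles T + 1" by linarith
  assume "\<not> (cluster_step T)\<^sup>*\<^sup>* (x, 0) (x, 2)"
  then have apart: "\<not> (circle_step T)\<^sup>*\<^sup>* (x, 0) (x, 2)"
    using mono_rtranclp[of "circle_step T" "cluster_step T"] circle_step_le_cluster_step by blast
  then have "card ?before = 2"
    unfolding before by (auto simp: card_insert_if)
  moreover have "card ?after = 1"
    using surgery_merges_circles[OF x \<open>x \<notin> T\<close> apart]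
      rtranclp_class_eq[OF symp_circle_step] unfolding after by simp
  ultimately show "ncircles (insert x T) + 1 \<le> ncircles T" using change by linarith
qed

lemma nclusters_insert:
  assumes x: "x \<in> A" and "x \<notin> T"
  shows "nclusters T \<le> nclusters (insert x T) + 1"
    and "(cluster_step T)\<^sup>*\<^sup>* (x, 0) (x, 2) \<Longrightarrow> nclusters T \<le> nclusters (insert x T)"
proof -
  let ?Q = "{x} \<times> {0..<4::nat}"
  let ?before = "classes (cluster_step T) ?Q" and ?after = "classes (cluster_step (insert x T)) ?Q"
  have change: "nclusters T + card ?after = nclusters (insert x T) + card ?before"
    unfolding nclusters_def
    by (rule card_classes_local_change[OF symp_cluster_step symp_cluster_step])
      (use cluster_step_insert finite_corners x in auto)
  have before: "?before = {Collect ((cluster_step T)\<^sup>*\<^sup>* (x, 0)), Collect ((cluster_step T)\<^sup>*\<^sup>* (x, 2))}"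
    using cluster_classes_of_square[OF x, of T] \<open>x \<notin> T\<close> by simp
  have "card ?after = 1"
    using cluster_classes_of_square[OF x, of "insert x T"] by simp
  moreover have "card ?before \<le> 2" unfolding before by (simp add: card_insert_if)
  ultimately show "nclusters T \<le> nclusters (insert x T) + 1" using change by linarith
  assume "(cluster_step T)\<^sup>*\<^sup>* (x, 0) (x, 2)"
  then have "card ?before = 1"
    using rtranclp_class_eq[OF symp_cluster_step] unfolding before by simp
  with change \<open>card ?after = 1\<close> show "nclusters T \<le> nclusters (insert x T)" by linarith
qed

lemma nclusters_empty: "nclusters {} = ncircles {}"
proof -
  have "cluster_step {} = circle_step {}"
    by (intro ext) (auto simp: cluster_step_def circle_step_def)
  then show ?thesis by (simp add: nclusters_def ncircles_def)
qed

text \<open>Each surgery changes the number of circles by at most one, and decreases it when the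
  arc joins two different clusters, which it then merges.\<close>

lemma circle_count_bound:
  assumes "T \<subseteq> A"
  shows "ncircles T + ncircles {} \<le> card T + 2 * nclusters T \<and> ncircles {} \<le> card T + nclusters T"
  using finite_subset[OF assms finite_arcs] assms
proof (induction T rule: finite_induct)
  case empty
  then show ?case by (simp add: nclusters_empty)
next
  case (insert x T)
  then have x: "x \<in> A" and IH: "ncircles T + ncircles {} \<le> card T + 2 * nclusters T"
    "ncircles {} \<le> card T + nclusters T" by auto
  show ?case
  proof (cases "(cluster_step T)\<^sup>*\<^sup>* (x, 0) (x, 2)")
    case True
    with IH insert.hyps nclusters_insert[OF x \<open>x \<notin> T\<close>] ncircles_insert(1)[OF x \<open>x \<notin> T\<close>]
    show ?thesis by simp
  next
    case False
    with IH insert.hyps nclusters_insert(1)[OF x \<open>x \<notin> T\<close>] ncircles_insert(2)[OF x \<open>x \<notin> T\<close>]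
    show ?thesis by simp
  qed
qed

corollary connected_circle_count_bound:
  assumes "nclusters A = 1"
  shows "ncircles A + ncircles {} \<le> card A + 2" and "ncircles {} \<le> card A + 1"
  using circle_count_bound[OF order_refl] assms by simp_all

end

section \<open>Components of a configuration\<close>

lemma rtranclp_restrict_eq:
  assumes closed: "\<And>c d. c \<in> K \<Longrightarrow> R c d \<Longrightarrow> d \<in> K"
    and agree: "\<And>c d. c \<in> K \<Longrightarrow> R c d \<longleftrightarrow> R' c d"
    and dom: "\<And>c d. R' c d \<Longrightarrow> c \<in> K" and "c \<in> K"
  shows "R\<^sup>*\<^sup>* c d \<longleftrightarrow> R'\<^sup>*\<^sup>* c d"
proof
  assume "R\<^sup>*\<^sup>* c d"
  then have "R'\<^sup>*\<^sup>* c d \<and> d \<in> K"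
    by induction (use \<open>c \<in> K\<close> closed agree in \<open>auto intro: rtranclp.rtrancl_into_rtrancl\<close>)
  then show "R'\<^sup>*\<^sup>* c d" ..
next
  assume "R'\<^sup>*\<^sup>* c d"
  then show "R\<^sup>*\<^sup>* c d"
    by induction (use dom agree in \<open>auto intro: rtranclp.rtrancl_into_rtrancl\<close>)
qed

lemma corners_iff: "c \<in> corners C \<longleftrightarrow> fst c \<in> arcs C \<and> snd c < 4"
  by (cases c) (simp add: corners_def)

lemma wf_finite_corners: "wf_cfg C \<Longrightarrow> finite (corners C)"
  by (simp add: corners_def wf_cfg_def)

lemma wf_outer:
  "wf_cfg C \<Longrightarrow> c \<in> corners C \<Longrightarrow> outer C c \<in> corners C \<and> outer C c \<noteq> c \<and> outer C (outer C c) = c"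
  by (simp add: wf_cfg_def)

lemma symp_cstep: "wf_cfg C \<Longrightarrow> symp (cstep C)"
  by (rule sympI) (auto simp: cstep_def wf_outer)

lemma compclass_eq: "wf_cfg C \<Longrightarrow> d \<in> compclass C c \<Longrightarrow> compclass C d = compclass C c"
  using rtranclp_class_eq[OF symp_cstep] by (simp add: compclass_def)

lemma compclass_closed: "d \<in> compclass C c \<Longrightarrow> cstep C d e \<Longrightarrow> e \<in> compclass C c"
  by (simp add: compclass_def rtranclp.rtrancl_into_rtrancl)

lemma compclass_subset: "c \<in> corners C \<Longrightarrow> compclass C c \<subseteq> corners C"
  unfolding compclass_def by (auto elim: rtranclp.cases simp: cstep_def)

lemma component_subset: "K \<in> ACs C \<Longrightarrow> K \<subseteq> corners C"
  using compclass_subset by (auto simp: ACs_def)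

lemma component_closed: "K \<in> ACs C \<Longrightarrow> c \<in> K \<Longrightarrow> cstep C c d \<Longrightarrow> d \<in> K"
  unfolding ACs_def using compclass_closed by blast

lemma component_eq_compclass: "wf_cfg C \<Longrightarrow> K \<in> ACs C \<Longrightarrow> c \<in> K \<Longrightarrow> compclass C c = K"
  unfolding ACs_def using compclass_eq by blast

lemma component_nonempty: "K \<in> ACs C \<Longrightarrow> K \<noteq> {}"
  using compclass_def by (auto simp: ACs_def)

lemma component_squares:
  assumes "K \<in> ACs C"
  shows "K = fst ` K \<times> {0..<4}"
proof (intro equalityI subsetI)
  fix d :: corner assume "d \<in> fst ` K \<times> {0..<4}"
  then obtain c where c: "c \<in> K" "fst c = fst d" and "snd d < 4" by (cases d) auto
  with component_subset[OF assms] have "cstep C c d" by (auto simp: cstep_def corners_iff)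
  with c(1) show "d \<in> K" using component_closed[OF assms] by blast
qed (use component_subset[OF assms] corners_iff in force)

lemma arc_diagram_component:
  assumes wf: "wf_cfg C" and K: "K \<in> ACs C"
  shows "arc_diagram (fst ` K) (outer C)"
proof
  have "fst ` K \<subseteq> arcs C" using component_subset[OF K] corners_iff by blast
  then show "finite (fst ` K)" using wf finite_subset by (auto simp: wf_cfg_def)
  fix c :: corner assume "c \<in> fst ` K \<times> {0..<4}"
  then have c: "c \<in> K" "c \<in> corners C" using component_squares[OF K] component_subset[OF K] by auto
  then have "cstep C c (outer C c)" using wf_outer[OF wf] by (simp add: cstep_def)
  with c(1) have "outer C c \<in> K" using component_closed[OF K] by blast
  then show "outer C c \<in> fst ` K \<times> {0..<4}" using component_squares[OF K] by blast
  show "outer C c \<noteq> c" "outer C (outer C c) = c" using wf_outer[OF wf c(2)] by auto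
qed

lemma component_corner_iff: "K \<in> ACs C \<Longrightarrow> d \<in> fst ` K \<times> {0..<4} \<longleftrightarrow> d \<in> K"
  using component_squares by blast

lemma component_class_eq:
  assumes K: "K \<in> ACs C" and "c \<in> K"
    and iff: "\<And>c d. c \<in> K \<Longrightarrow> d \<in> K \<Longrightarrow> S c d \<longleftrightarrow> R c d"
    and S_cstep: "\<And>c d. S c d \<Longrightarrow> cstep C c d"
    and R_dom: "\<And>c d. R c d \<Longrightarrow> c \<in> K \<and> d \<in> K"
  shows "Collect (S\<^sup>*\<^sup>* c) = Collect (R\<^sup>*\<^sup>* c)"
proof -
  have closed: "d \<in> K" if "c \<in> K" "S c d" for c d
    using component_closed[OF K] S_cstep that by blast
  have "S\<^sup>*\<^sup>* c d \<longleftrightarrow> R\<^sup>*\<^sup>* c d" for d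
    by (rule rtranclp_restrict_eq[OF closed _ _ \<open>c \<in> K\<close>]) (use closed iff R_dom in blast)+
  then show ?thesis by blast
qed

lemma card_Circ_image: "card ((\<lambda>c. Circ (f c)) ` X) = card (f ` X)"
proof -
  have "(\<lambda>c. Circ (f c)) ` X = Circ ` f ` X" by auto
  then show ?thesis by (simp add: card_image inj_on_def)
qed

context
  fixes C :: cfg and K :: "corner set"
  assumes wf: "wf_cfg C" and K: "K \<in> ACs C"
begin

interpretation K: arc_diagram "fst ` K" "outer C"
  by (rule arc_diagram_component[OF wf K])

lemma sclass_component: "c \<in> K \<Longrightarrow> sclass C c = Collect ((K.circle_step {})\<^sup>*\<^sup>* c)"
  unfolding sclass_def
  by (rule component_class_eq[OF K])
    (use component_subset[OF K] component_corner_iff[OF K] in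
      \<open>auto simp: sstep_def cstep_def K.circle_step_def resolution_partner_def\<close>)

lemma eclass_component: "c \<in> K \<Longrightarrow> eclass C c = Collect ((K.circle_step (fst ` K))\<^sup>*\<^sup>* c)"
  unfolding eclass_def
  by (rule component_class_eq[OF K])
    (use component_subset[OF K] component_corner_iff[OF K] in
      \<open>auto simp: estep_def cstep_def K.circle_step_def resolution_partner_def\<close>)

lemma compclass_component: "c \<in> K \<Longrightarrow> compclass C c = Collect ((K.cluster_step (fst ` K))\<^sup>*\<^sup>* c)"
  unfolding compclass_def
  by (rule component_class_eq[OF K])
    (use component_subset[OF K] component_corner_iff[OF K] in
      \<open>auto simp: cstep_def K.cluster_step_def resolution_partner_def\<close>)

lemma card_SCK_component: "card (SCK C K) = K.ncircles {}"
proof -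
  have "sclass C ` K = classes (K.circle_step {}) K"
    unfolding classes_def using sclass_component by simp
  then show ?thesis
    by (simp add: SCK_def card_Circ_image K.ncircles_def component_squares[OF K, symmetric])
qed

lemma card_ECK_component: "card (ECK C K) = K.ncircles (fst ` K)"
proof -
  have "eclass C ` K = classes (K.circle_step (fst ` K)) K"
    unfolding classes_def using eclass_component by simp
  then show ?thesis
    by (simp add: ECK_def card_Circ_image K.ncircles_def component_squares[OF K, symmetric])
qed

lemma component_connected: "K.nclusters (fst ` K) = 1"
proof -
  have "compclass C ` K = {K}"
    using component_eq_compclass[OF wf K] component_nonempty[OF K] by blast
  moreover have "compclass C ` K = classes (K.cluster_step (fst ` K)) K"
    unfolding classes_def using compclass_component by simp
  ultimately show ?thesis by (simp add: K.nclusters_def component_squares[OF K, symmetric])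
qed

lemma component_circle_bounds:
  shows "card (SCK C K) + card (ECK C K) \<le> card (fst ` K) + 2"
    and "card (SCK C K) \<le> card (fst ` K) + 1"
  using K.connected_circle_count_bound[OF component_connected]
  by (simp_all add: card_SCK_component card_ECK_component add.commute)

lemma component_cards_pos: "1 \<le> card (SCK C K)" "1 \<le> card (ECK C K)" "1 \<le> card (fst ` K)"
  using component_nonempty[OF K] finite_subset[OF component_subset[OF K] wf_finite_corners[OF wf]]
  by (simp_all add: SCK_def ECK_def Suc_le_eq card_gt_0_iff)

end

lemma Union_components: "\<Union>(ACs C) = corners C"
  using compclass_subset compclass_def by (fastforce simp: ACs_def)

lemma component_circles_disjoint:
  assumes wf: "wf_cfg C" and self: "\<And>c. c \<in> f c" and sub: "\<And>c. f c \<subseteq> compclass C c"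
    and K: "K \<in> ACs C" and K': "K' \<in> ACs C" and "K \<noteq> K'"
  shows "(\<lambda>c. Circ (f c)) ` K \<inter> (\<lambda>c. Circ (f c)) ` K' = {}"
proof (rule ccontr)
  assume "(\<lambda>c. Circ (f c)) ` K \<inter> (\<lambda>c. Circ (f c)) ` K' \<noteq> {}"
  then obtain c c' where "c \<in> K" "c' \<in> K'" "f c = f c'" by auto
  then have "c' \<in> compclass C c" using self sub by blast
  then have "K' = K"
    using component_eq_compclass[OF wf] compclass_eq[OF wf] K K' \<open>c \<in> K\<close> \<open>c' \<in> K'\<close> by metis
  with \<open>K \<noteq> K'\<close> show False by simp
qed

lemma component_arcs_disjoint:
  assumes wf: "wf_cfg C" and K: "K \<in> ACs C" and K': "K' \<in> ACs C" and "K \<noteq> K'"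
  shows "fst ` K \<inter> fst ` K' = {}"
proof (rule ccontr)
  assume "fst ` K \<inter> fst ` K' \<noteq> {}"
  then obtain c c' where "c \<in> K" "c' \<in> K'" "fst c = fst c'" by auto
  then have "cstep C c c'" using component_subset K K' by (auto simp: cstep_def)
  then have "c' \<in> K" using component_closed[OF K \<open>c \<in> K\<close>] by blast
  then have "K' = K"
    using component_eq_compclass[OF wf] K K' \<open>c' \<in> K'\<close> by metis
  with \<open>K \<noteq> K'\<close> show False by simp
qed

lemma wf_finite_pas: "wf_cfg C \<Longrightarrow> finite (pas C)"
  by (simp add: wf_cfg_def)

lemma finite_components: "wf_cfg C \<Longrightarrow> finite (ACs C)"
  by (simp add: ACs_def wf_finite_corners)

lemma finite_component: "wf_cfg C \<Longrightarrow> K \<in> ACs C \<Longrightarrow> finite K"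
  using finite_subset[OF component_subset wf_finite_corners] .

lemma card_split_components:
  assumes wf: "wf_cfg C" and self: "\<And>c. c \<in> f c" and sub: "\<And>c. f c \<subseteq> compclass C c"
    and a: "a \<subseteq> (\<lambda>c. Circ (f c)) ` corners C \<union> PasC ` pas C"
  shows "card a = (\<Sum>K\<in>ACs C. card (a \<inter> (\<lambda>c. Circ (f c)) ` K)) + card (a \<inter> PasC ` pas C)"
proof -
  let ?U = "\<Union>K\<in>ACs C. a \<inter> (\<lambda>c. Circ (f c)) ` K" and ?V = "a \<inter> PasC ` pas C"
  have "a \<subseteq> (\<Union>K\<in>ACs C. (\<lambda>c. Circ (f c)) ` K) \<union> PasC ` pas C"
    using a by (simp add: Union_components[symmetric] image_Union)
  then have "a = ?U \<union> ?V" by auto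
  moreover have "finite ?U"
    using finite_components[OF wf] finite_component[OF wf] by blast
  moreover have "finite ?V" using wf_finite_pas[OF wf] by blast
  moreover have "?U \<inter> ?V = {}" by auto
  ultimately have "card a = card ?U + card ?V" by (metis card_Un_disjoint)
  moreover have "card ?U = (\<Sum>K\<in>ACs C. card (a \<inter> (\<lambda>c. Circ (f c)) ` K))"
    by (rule card_UN_disjoint)
      (use finite_components[OF wf] finite_component[OF wf] component_circles_disjoint[OF wf self sub]
       in blast)+
  ultimately show ?thesis by simp
qed

lemma sclass_subset_compclass: "sclass C c \<subseteq> compclass C c"
proof -
  have "sstep C \<le> cstep C" by (auto simp: sstep_def cstep_def)
  then show ?thesis
    unfolding sclass_def compclass_def by (auto dest: rtranclp_mono[THEN predicate2D])
qed

lemma eclass_subset_compclass: "eclass C c \<subseteq> compclass C c"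
proof -
  have "estep C \<le> cstep C" by (auto simp: estep_def cstep_def)
  then show ?thesis
    unfolding eclass_def compclass_def by (auto dest: rtranclp_mono[THEN predicate2D])
qed

lemma card_SC_split:
  "wf_cfg C \<Longrightarrow> a \<subseteq> SC C \<Longrightarrow>
    card a = (\<Sum>K\<in>ACs C. card (a \<inter> SCK C K)) + card (a \<inter> PasC ` pas C)"
  unfolding SCK_def
  by (rule card_split_components[OF _ _ sclass_subset_compclass]) (auto simp: sclass_def SC_def)

lemma card_EC_split:
  "wf_cfg C \<Longrightarrow> b \<subseteq> EC C \<Longrightarrow>
    card b = (\<Sum>K\<in>ACs C. card (b \<inter> ECK C K)) + card (b \<inter> PasC ` pas C)"
  unfolding ECK_def
  by (rule card_split_components[OF _ _ eclass_subset_compclass]) (auto simp: eclass_def EC_def)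

lemma card_arcs_split:
  assumes wf: "wf_cfg C"
  shows "card (arcs C) = (\<Sum>K\<in>ACs C. card (fst ` K))"
proof -
  have "arcs C = fst ` corners C" by (force simp: corners_def)
  also have "\<dots> = (\<Union>K\<in>ACs C. fst ` K)" by (simp add: Union_components[symmetric] image_Union)
  finally have "card (arcs C) = card (\<Union>K\<in>ACs C. fst ` K)" by simp
  also have "\<dots> = (\<Sum>K\<in>ACs C. card (fst ` K))"
    by (rule card_UN_disjoint)
      (use finite_components[OF wf] finite_component[OF wf] component_arcs_disjoint[OF wf] in auto)
  finally show ?thesis .
qed

section \<open>Dual trees\<close>

lemma rtranclp_class_transfer:
  assumes bij: "\<And>c. c \<in> X \<Longrightarrow> u c \<in> X \<and> v c \<in> X \<and> v (u c) = c \<and> u (v c) = c"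
    and R'_iff: "\<And>c d. R' c d \<longleftrightarrow> c \<in> X \<and> d \<in> X \<and> R (v c) (v d)"
    and R_dom: "\<And>c d. R c d \<Longrightarrow> c \<in> X \<and> d \<in> X"
    and "c \<in> X"
  shows "Collect (R'\<^sup>*\<^sup>* (u c)) = u ` Collect (R\<^sup>*\<^sup>* c)"
proof (intro equalityI subsetI)
  fix d assume "d \<in> Collect (R'\<^sup>*\<^sup>* (u c))"
  then have "R'\<^sup>*\<^sup>* (u c) d" by simp
  then have "R\<^sup>*\<^sup>* c (v d) \<and> d \<in> X"
  proof induction
    case base
    then show ?case using bij \<open>c \<in> X\<close> by simp
  next
    case (step y z)
    then show ?case using R'_iff by (auto intro: rtranclp.rtrancl_into_rtrancl)
  qed
  then show "d \<in> u ` Collect (R\<^sup>*\<^sup>* c)" using bij by force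
next
  fix d assume "d \<in> u ` Collect (R\<^sup>*\<^sup>* c)"
  then obtain d0 where "d = u d0" "R\<^sup>*\<^sup>* c d0" by blast
  moreover from \<open>R\<^sup>*\<^sup>* c d0\<close> have "R'\<^sup>*\<^sup>* (u c) (u d0)"
  proof induction
    case (step y z)
    then have "R' (u y) (u z)" using R_dom bij R'_iff by simp
    with step show ?case by (simp add: rtranclp.rtrancl_into_rtrancl)
  qed simp
  ultimately show "d \<in> Collect (R'\<^sup>*\<^sup>* (u c))" by simp
qed

abbreviation rotate_corner :: "corner \<Rightarrow> corner" where
  "rotate_corner \<equiv> maph (\<lambda>e j. (j + 1) mod 4)"

abbreviation unrotate_corner :: "corner \<Rightarrow> corner" where
  "unrotate_corner \<equiv> maph (\<lambda>e j. (j + 3) mod 4)"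

lemma rotate_corner_bij:
  assumes "c \<in> corners C"
  shows "rotate_corner c \<in> corners C \<and> unrotate_corner c \<in> corners C \<and>
    unrotate_corner (rotate_corner c) = c \<and> rotate_corner (unrotate_corner c) = c"
proof -
  have "snd c < 4" using assms corners_iff by blast
  with assms show ?thesis
    by (cases c) (auto simp: maph_def corners_iff dest!: less_4_cases)
qed

lemma corners_undual: "corners (undual C) = corners C"
  by (simp add: corners_def undual_def relab_def)

lemma outer_undual: "outer (undual C) c = rotate_corner (outer C (unrotate_corner c))"
  by (simp add: undual_def relab_def)

lemma outer_undual_iff:
  assumes wf: "wf_cfg C" and "c \<in> corners C" and "d \<in> corners C"
  shows "d = outer (undual C) c \<longleftrightarrow> unrotate_corner d = outer C (unrotate_corner c)"
proof -
  have "outer C (unrotate_corner c) \<in> corners C"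
    using assms rotate_corner_bij wf_outer[OF wf] by blast
  then show ?thesis using assms rotate_corner_bij outer_undual by metis
qed

lemma unrotate_spair_epair:
  assumes "i < 4" and "j < 4"
  shows "j = spair i \<longleftrightarrow> (j + 3) mod 4 = epair ((i + 3) mod 4)"
    and "j = epair i \<longleftrightarrow> (j + 3) mod 4 = spair ((i + 3) mod 4)"
  using less_4_cases[OF assms(1)] less_4_cases[OF assms(2)]
  by (elim disjE; simp add: spair_def epair_def)+

lemma sstep_undual:
  assumes "wf_cfg C"
  shows "sstep (undual C) c d \<longleftrightarrow>
    c \<in> corners C \<and> d \<in> corners C \<and> estep C (unrotate_corner c) (unrotate_corner d)"
proof (cases "c \<in> corners C \<and> d \<in> corners C")
  case True
  moreover have "unrotate_corner c \<in> corners C" "unrotate_corner d \<in> corners C"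
    using True rotate_corner_bij by blast+
  moreover have "fst (unrotate_corner x) = fst x" "snd (unrotate_corner x) = (snd x + 3) mod 4"
    for x by (simp_all add: maph_def)
  ultimately show ?thesis
    using outer_undual_iff[OF assms, of c d] unrotate_spair_epair(1)[of "snd c" "snd d"] corners_iff
    by (simp add: sstep_def estep_def corners_undual)
qed (auto simp: sstep_def corners_undual)

lemma estep_undual:
  assumes "wf_cfg C"
  shows "estep (undual C) c d \<longleftrightarrow>
    c \<in> corners C \<and> d \<in> corners C \<and> sstep C (unrotate_corner c) (unrotate_corner d)"
proof (cases "c \<in> corners C \<and> d \<in> corners C")
  case True
  moreover have "unrotate_corner c \<in> corners C" "unrotate_corner d \<in> corners C"
    using True rotate_corner_bij by blast+
  moreover have "fst (unrotate_corner x) = fst x" "snd (unrotate_corner x) = (snd x + 3) mod 4"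
    for x by (simp_all add: maph_def)
  ultimately show ?thesis
    using outer_undual_iff[OF assms, of c d] unrotate_spair_epair(2)[of "snd c" "snd d"] corners_iff
    by (simp add: sstep_def estep_def corners_undual)
qed (auto simp: estep_def corners_undual)

lemma sclass_undual:
  "wf_cfg C \<Longrightarrow> c \<in> corners C \<Longrightarrow> sclass (undual C) (rotate_corner c) = rotate_corner ` eclass C c"
  unfolding sclass_def eclass_def
  by (rule rtranclp_class_transfer[where X = "corners C"])
    (use rotate_corner_bij sstep_undual in \<open>auto simp: estep_def\<close>)

lemma eclass_undual:
  "wf_cfg C \<Longrightarrow> c \<in> corners C \<Longrightarrow> eclass (undual C) (rotate_corner c) = rotate_corner ` sclass C c"
  unfolding sclass_def eclass_def
  by (rule rtranclp_class_transfer[where X = "corners C"])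
    (use rotate_corner_bij estep_undual in \<open>auto simp: sstep_def\<close>)

lemma card_rotated_circles:
  assumes "\<And>c. c \<in> X \<Longrightarrow> f c \<subseteq> corners C"
  shows "card ((\<lambda>c. Circ (rotate_corner ` f c)) ` X) = card (f ` X)"
proof -
  have "inj_on rotate_corner (corners C)"
    by (rule inj_on_inverseI[of _ unrotate_corner]) (use rotate_corner_bij in blast)
  then have "inj_on (\<lambda>S. Circ (rotate_corner ` S)) (f ` X)"
    using assms by (auto intro!: inj_onI simp: inj_on_image_eq_iff)
  moreover have "(\<lambda>c. Circ (rotate_corner ` f c)) ` X = (\<lambda>S. Circ (rotate_corner ` S)) ` f ` X"
    by auto
  ultimately show ?thesis by (simp add: card_image)
qed

lemma dtree_comp_iff:
  assumes wf: "wf_cfg C" and K: "K \<in> ACs C"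
  shows "dtree_comp C K \<longleftrightarrow> card (ECK C K) = card (fst ` K) + 1 \<and> card (SCK C K) = 1"
proof -
  have KC: "K \<subseteq> corners C" using component_subset[OF K] .
  have sub: "sclass C c \<subseteq> corners C" "eclass C c \<subseteq> corners C" if "c \<in> K" for c
    using sclass_subset_compclass eclass_subset_compclass compclass_subset KC that by blast+
  have "SCK (undual C) (rotate_corner ` K) = (\<lambda>c. Circ (sclass (undual C) (rotate_corner c))) ` K"
    by (simp add: SCK_def image_image)
  also have "\<dots> = (\<lambda>c. Circ (rotate_corner ` eclass C c)) ` K"
    using sclass_undual[OF wf] KC by (intro image_cong) auto
  finally have S: "card (SCK (undual C) (rotate_corner ` K)) = card (ECK C K)"
    using card_rotated_circles[of K "eclass C" C, OF sub(2)] by (simp add: ECK_def card_Circ_image)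
  have "ECK (undual C) (rotate_corner ` K) = (\<lambda>c. Circ (eclass (undual C) (rotate_corner c))) ` K"
    by (simp add: ECK_def image_image)
  also have "\<dots> = (\<lambda>c. Circ (rotate_corner ` sclass C c)) ` K"
    using eclass_undual[OF wf] KC by (intro image_cong) auto
  finally have E: "card (ECK (undual C) (rotate_corner ` K)) = card (SCK C K)"
    using card_rotated_circles[of K "sclass C" C, OF sub(1)] by (simp add: SCK_def card_Circ_image)
  have "fst ` rotate_corner ` K = fst ` K" by (simp add: maph_def image_image)
  with S E show ?thesis by (simp add: dtree_comp_def tree_comp_def)
qed

section \<open>The grading defect of a component\<close>

text \<open>The grading defect of K is 2 k_K minus the contribution of K to the quantum grading
  shift from a to b, where k_K is the number of arcs of K.\<close>

definition grading_defect :: "cfg \<Rightarrow> circ set \<Rightarrow> circ set \<Rightarrow> corner set \<Rightarrow> int" where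
  "grading_defect C a b K = int (card (SCK C K)) - int (card (ECK C K)) + int (card (fst ` K))
     - 2 * int (card (a \<inter> SCK C K)) + 2 * int (card (b \<inter> ECK C K))"

lemma defect_arith:
  fixes s e k \<alpha> \<beta> :: nat
  assumes "s + e \<le> k + 2" "s \<le> k + 1" "1 \<le> s" "1 \<le> e" "\<alpha> \<le> s" "\<beta> \<le> e"
    and "\<alpha> = s \<longrightarrow> \<beta> = e" and "0 < \<alpha> \<longrightarrow> 0 < \<beta>"
  shows "0 \<le> int s - int e + int k - 2 * int \<alpha> + 2 * int \<beta>"
    and "int s - int e + int k - 2 * int \<alpha> + 2 * int \<beta> = 0 \<Longrightarrow>
      (\<alpha> = s \<and> \<beta> = e \<and> s = k + 1 \<and> e = 1) \<or> (\<alpha> = 0 \<and> \<beta> = 0 \<and> s = 1 \<and> e = k + 1)"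
  using assms by (cases "\<alpha> = s"; cases "\<alpha> = 0"; simp; linarith)+

lemma filtration_component:
  assumes K: "K \<in> ACs C"
    and fc: "\<forall>c\<in>corners C. Circ (sclass C c) \<in> a \<longrightarrow> Circ (eclass C c) \<in> b"
  shows "SCK C K \<subseteq> a \<Longrightarrow> ECK C K \<subseteq> b"
    and "a \<inter> SCK C K \<noteq> {} \<Longrightarrow> b \<inter> ECK C K \<noteq> {}"
  using fc component_subset[OF K] by (auto simp: SCK_def ECK_def)

lemma grading_defect_cases:
  assumes wf: "wf_cfg C" and K: "K \<in> ACs C"
    and fc: "\<forall>c\<in>corners C. Circ (sclass C c) \<in> a \<longrightarrow> Circ (eclass C c) \<in> b"
  shows "0 \<le> grading_defect C a b K"
    and "grading_defect C a b K = 0 \<Longrightarrow>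
      (tree_comp C K \<and> \<not> dtree_comp C K \<and> SCK C K \<subseteq> a \<and> ECK C K \<subseteq> b) \<or>
      (dtree_comp C K \<and> \<not> tree_comp C K \<and> SCK C K \<inter> a = {} \<and> ECK C K \<inter> b = {})"
proof -
  have fin: "finite (SCK C K)" "finite (ECK C K)"
    using finite_component[OF wf K] by (simp_all add: SCK_def ECK_def)
  have full_iff: "card (x \<inter> X) = card X \<longleftrightarrow> X \<subseteq> x" if "finite X" for x X
    using card_subset_eq[OF that, of "x \<inter> X"] by (auto simp: Int_absorb1)
  have all: "card (a \<inter> SCK C K) = card (SCK C K) \<longrightarrow> card (b \<inter> ECK C K) = card (ECK C K)"
    using filtration_component(1)[OF K fc] full_iff fin by blast
  have some: "0 < card (a \<inter> SCK C K) \<longrightarrow> 0 < card (b \<inter> ECK C K)"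
    using filtration_component(2)[OF K fc] fin by (simp add: card_gt_0_iff)
  have le: "card (a \<inter> SCK C K) \<le> card (SCK C K)" "card (b \<inter> ECK C K) \<le> card (ECK C K)"
    using fin by (simp_all add: card_mono)
  note arith = defect_arith[OF component_circle_bounds[OF wf K] component_cards_pos(1,2)[OF wf K]
      le all some, folded grading_defect_def]
  show "0 \<le> grading_defect C a b K" by (rule arith(1))
  assume "grading_defect C a b K = 0"
  from arith(2)[OF this] show "(tree_comp C K \<and> \<not> dtree_comp C K \<and> SCK C K \<subseteq> a \<and> ECK C K \<subseteq> b) \<or>
      (dtree_comp C K \<and> \<not> tree_comp C K \<and> SCK C K \<inter> a = {} \<and> ECK C K \<inter> b = {})"
  proof (elim disjE conjE)
    assume "card (a \<inter> SCK C K) = card (SCK C K)" "card (b \<inter> ECK C K) = card (ECK C K)"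
      "card (SCK C K) = card (fst ` K) + 1" "card (ECK C K) = 1"
    moreover have "SCK C K \<subseteq> a" "ECK C K \<subseteq> b"
      using calculation(1,2) full_iff fin by blast+
    ultimately show ?thesis
      using component_cards_pos(3)[OF wf K] by (simp add: tree_comp_def dtree_comp_iff[OF wf K])
  next
    assume "card (a \<inter> SCK C K) = 0" "card (b \<inter> ECK C K) = 0"
      "card (SCK C K) = 1" "card (ECK C K) = card (fst ` K) + 1"
    then show ?thesis
      using component_cards_pos(3)[OF wf K] fin
      by (simp add: tree_comp_def dtree_comp_iff[OF wf K] Int_commute)
  qed
qed

lemma SCK_subset_SC: "K \<in> ACs C \<Longrightarrow> SCK C K \<subseteq> SC C"
  using component_subset by (fastforce simp: SCK_def SC_def)

lemma ECK_subset_EC: "K \<in> ACs C \<Longrightarrow> ECK C K \<subseteq> EC C"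
  using component_subset by (fastforce simp: ECK_def EC_def)

lemma sum_grading_defect:
  assumes wf: "wf_cfg C" and a: "a \<subseteq> SC C" and b: "b \<subseteq> EC C"
    and shift: "int (card (EC C)) - 2 * int (card b) + int (card (arcs C))
      = int (card (SC C)) - 2 * int (card a) + 2 * int (card (arcs C))"
  shows "(\<Sum>K\<in>ACs C. grading_defect C a b K)
    = 2 * int (card (a \<inter> PasC ` pas C)) - 2 * int (card (b \<inter> PasC ` pas C))"
proof -
  let ?P = "PasC ` pas C"
  have "card (SC C) = (\<Sum>K\<in>ACs C. card (SCK C K)) + card ?P"
    using card_SC_split[OF wf order_refl] SCK_subset_SC by (simp add: Int_absorb1 SC_def)
  moreover have "card (EC C) = (\<Sum>K\<in>ACs C. card (ECK C K)) + card ?P"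
    using card_EC_split[OF wf order_refl] ECK_subset_EC by (simp add: Int_absorb1 EC_def)
  moreover have "(\<Sum>K\<in>ACs C. grading_defect C a b K) =
      int (\<Sum>K\<in>ACs C. card (SCK C K)) - int (\<Sum>K\<in>ACs C. card (ECK C K))
      + int (\<Sum>K\<in>ACs C. card (fst ` K)) - 2 * int (\<Sum>K\<in>ACs C. card (a \<inter> SCK C K))
      + 2 * int (\<Sum>K\<in>ACs C. card (b \<inter> ECK C K))"
    by (simp add: grading_defect_def of_nat_sum sum.distrib sum_subtractf sum_distrib_left)
  ultimately show ?thesis
    using shift card_SC_split[OF wf a] card_EC_split[OF wf b] card_arcs_split[OF wf] by simp
qed

lemma nonzero_coefficient_sss:
  assumes wf: "wf_cfg C" and "filtration_rule F" and "bidegree_rule F"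
    and a: "a \<subseteq> SC C" and b: "b \<subseteq> EC C" and "F C a b"
  shows "sss C a b"
proof -
  let ?P = "PasC ` pas C"
  have fc: "\<forall>c\<in>corners C. Circ (sclass C c) \<in> a \<longrightarrow> Circ (eclass C c) \<in> b"
    and "\<forall>w\<in>pas C. PasC w \<in> a \<longrightarrow> PasC w \<in> b"
    using assms by (simp_all add: filtration_rule_def)
  then have passive_sub: "a \<inter> ?P \<subseteq> b \<inter> ?P" by blast
  have fin_P: "finite (b \<inter> ?P)" using wf_finite_pas[OF wf] by simp
  have defects: "(\<Sum>K\<in>ACs C. grading_defect C a b K)
      = 2 * int (card (a \<inter> ?P)) - 2 * int (card (b \<inter> ?P))"
    using assms by (intro sum_grading_defect) (simp_all add: bidegree_rule_def)
  have nonneg: "\<forall>K\<in>ACs C. 0 \<le> grading_defect C a b K"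
    using grading_defect_cases(1)[OF wf _ fc] by blast
  then have "0 \<le> (\<Sum>K\<in>ACs C. grading_defect C a b K)" by (simp add: sum_nonneg)
  moreover have "card (a \<inter> ?P) \<le> card (b \<inter> ?P)" using card_mono[OF fin_P passive_sub] .
  ultimately have "(\<Sum>K\<in>ACs C. grading_defect C a b K) = 0"
    and "card (a \<inter> ?P) = card (b \<inter> ?P)"
    using defects by linarith+
  then have zero: "\<forall>K\<in>ACs C. grading_defect C a b K = 0" and passive_eq: "a \<inter> ?P = b \<inter> ?P"
    using sum_nonneg_eq_0_iff[OF finite_components[OF wf]] nonneg
      card_subset_eq[OF fin_P passive_sub] by auto
  have pattern: "(tree_comp C K \<and> \<not> dtree_comp C K \<and> SCK C K \<subseteq> a \<and> ECK C K \<subseteq> b) \<or>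
      (dtree_comp C K \<and> \<not> tree_comp C K \<and> SCK C K \<inter> a = {} \<and> ECK C K \<inter> b = {})"
    if "K \<in> ACs C" for K
    using grading_defect_cases(2)[OF wf that fc] zero that by blast
  show ?thesis unfolding sss_def
  proof (intro conjI ballI)
    fix K assume "K \<in> ACs C"
    from pattern[OF this] show "tree_comp C K \<or> dtree_comp C K"
      and "tree_comp C K \<longrightarrow> SCK C K \<subseteq> a \<and> ECK C K \<subseteq> b"
      and "dtree_comp C K \<longrightarrow> SCK C K \<inter> a = {} \<and> ECK C K \<inter> b = {}" by blast+
  next
    fix w assume "w \<in> pas C"
    with passive_eq show "PasC w \<in> a \<longleftrightarrow> PasC w \<in> b" by blast
  qed
qed

section \<open>Coefficients of the Sarkar-Seed-Szabo shape\<close>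

lemma SC_active: "SC (active C) = (\<lambda>c. Circ (sclass C c)) ` corners C"
proof -
  have "corners (active C) = corners C" "sstep (active C) = sstep C"
    by (simp_all add: active_def corners_def sstep_def[abs_def])
  then show ?thesis by (simp add: SC_def sclass_def active_def)
qed

lemma extension_coefficient:
  assumes wf: "wf_cfg C" and ext: "extension_rule F" and a: "a \<subseteq> SC C" and b: "b \<subseteq> EC C"
  shows "F C a b \<longleftrightarrow>
    b \<inter> PasC ` pas C = a \<inter> PasC ` pas C \<and> F (active C) (a - PasC ` pas C) (b - PasC ` pas C)"
proof -
  let ?P = "PasC ` pas C"
  define v where "v = {w \<in> pas C. PasC w \<in> a}"
  have v: "v \<subseteq> pas C" "PasC ` v = a \<inter> ?P" by (auto simp: v_def)
  have "a - ?P \<subseteq> SC (active C)" using a unfolding SC_active by (auto simp: SC_def)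
  note reduce = ext[unfolded extension_rule_def, rule_format, OF wf this v(1) b]
  have "(a - ?P) \<union> PasC ` v = a" using v(2) by blast
  with reduce show ?thesis using v(2) by simp
qed

lemma SC_components: "SC C = (\<Union>K\<in>ACs C. SCK C K) \<union> PasC ` pas C"
  by (simp add: SC_def SCK_def Union_components[symmetric] image_Union)

lemma EC_components: "EC C = (\<Union>K\<in>ACs C. ECK C K) \<union> PasC ` pas C"
  by (simp add: EC_def ECK_def Union_components[symmetric] image_Union)

lemma diff_eq_if_pieces_eq:
  assumes "x \<subseteq> (\<Union>i\<in>I. S i) \<union> P" and "x' \<subseteq> (\<Union>i\<in>I. S i) \<union> P"
    and "\<And>i. i \<in> I \<Longrightarrow> x \<inter> S i = x' \<inter> S i"
  shows "x - P = x' - P"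
  using assms by blast

lemma sss_component_parts:
  assumes "sss C a b" and "K \<in> ACs C"
  shows "a \<inter> SCK C K = (if tree_comp C K then SCK C K else {})"
    and "b \<inter> ECK C K = (if tree_comp C K then ECK C K else {})"
  using assms unfolding sss_def by auto

lemma sss_active_part_eq:
  assumes "sss C a b" and "sss C a' b'"
    and "a \<subseteq> SC C" "a' \<subseteq> SC C" "b \<subseteq> EC C" "b' \<subseteq> EC C"
  shows "a - PasC ` pas C = a' - PasC ` pas C" and "b - PasC ` pas C = b' - PasC ` pas C"
proof -
  show "a - PasC ` pas C = a' - PasC ` pas C"
    by (rule diff_eq_if_pieces_eq[where S = "SCK C" and I = "ACs C"])
      (use assms(3,4) sss_component_parts(1)[OF assms(1)] sss_component_parts(1)[OF assms(2)] in
        \<open>simp_all add: SC_components[symmetric]\<close>)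
  show "b - PasC ` pas C = b' - PasC ` pas C"
    by (rule diff_eq_if_pieces_eq[where S = "ECK C" and I = "ACs C"])
      (use assms(5,6) sss_component_parts(2)[OF assms(1)] sss_component_parts(2)[OF assms(2)] in
        \<open>simp_all add: EC_components[symmetric]\<close>)
qed

lemma sss_nonzero_coefficient:
  assumes wf: "wf_cfg C" and ext: "extension_rule F"
    and a0: "a0 \<subseteq> SC C" and b0: "b0 \<subseteq> EC C" and "F C a0 b0" and "sss C a0 b0"
    and a: "a \<subseteq> SC C" and b: "b \<subseteq> EC C" and "sss C a b"
  shows "F C a b"
proof -
  have "F (active C) (a0 - PasC ` pas C) (b0 - PasC ` pas C)"
    using \<open>F C a0 b0\<close> extension_coefficient[OF wf ext a0 b0] by blast
  moreover have "b \<inter> PasC ` pas C = a \<inter> PasC ` pas C"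
    using \<open>sss C a b\<close> by (auto simp: sss_def)
  ultimately show ?thesis
    using extension_coefficient[OF wf ext a b] sss_active_part_eq[OF \<open>sss C a b\<close> \<open>sss C a0 b0\<close> a a0 b b0]
    by simp
qed

theorem theorem3p5:
  fixes F :: "cfg \<Rightarrow> cmap" and C :: cfg
  assumes "naturality_rule F" and "disoriented_rule F" and "duality_rule F"
    and "extension_rule F" and "filtration_rule F" and "bidegree_rule F"
    and "wf_cfg C"
    and "\<exists>a b. a \<subseteq> SC C \<and> b \<subseteq> EC C \<and> F C a b"
  shows "\<forall>a b. a \<subseteq> SC C \<longrightarrow> b \<subseteq> EC C \<longrightarrow> F C a b = sss C a b"
proof (intro allI impI)
  fix a b assume a: "a \<subseteq> SC C" and b: "b \<subseteq> EC C"
  obtain a0 b0 where ab0: "a0 \<subseteq> SC C" "b0 \<subseteq> EC C" "F C a0 b0" using assms(8) by blast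
  have "sss C a0 b0" using nonzero_coefficient_sss[OF assms(7,5,6) ab0] .
  then show "F C a b = sss C a b"
    using nonzero_coefficient_sss[OF assms(7,5,6) a b]
      sss_nonzero_coefficient[OF assms(7,4) ab0 _ a b] by blast
qed

end
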